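(* Let $t\ge2$, $\sigma\in S_t$, and let $p=\mathrm{red}(\sigma_1\cdots\sigma_{t-1})\in S_{t-1}$. Let $\vec v\in\mathbb{N}^{t}$ be the vector with $v_{\sigma_t}=1$ and $v_i=0$ for $i\ne\sigma_t$. Then $\vec v$ is a gap vector for the prefix $p$ with respect to $\{(\sigma,[t-2])\}$, and the set $\{1\}$ is reversibly deletable for $p$ with respect to $\{(\sigma,[t-2])\}$.
   Context: $\mathrm{red}(w)$ replaces the $i$-th smallest letter of a word of distinct integers by $i$. A vincular pattern $(\sigma,X)$, $\sigma\in S_\ell$, $X\subseteq[\ell-1]$, is contained in $\pi$ if there are $i_1<\dots<i_\ell$ with $\mathrm{red}(\pi_{i_1}\cdots\pi_{i_\ell})=\sigma$ and $i_{x+1}=i_x+1$ for $x\in X$; $(\sigma,[t-2])$ is the pattern $\sigma_1\cdots\sigma_{t-1}\text{-}\sigma_t$. For $p\in S_k$ and $w\in[n]^k$ with distinct letters and $\mathrm{red}(w)=p$, $S_n^B(p;w)$ is the set of $B$-avoiding $\pi\in S_n$ with $\pi_i=w_i$ ($i\le k$). The spacing vector $\vec g(n,w)\in\mathbb{N}^{k+1}$ has $i$-th component $c_i-c_{i-1}-1$, with $c_i$ the $i$-th smallest letter of $w$, $c_0=0$, $c_{k+1}=n+1$. $\vec v$ is a gap vector for $p$ w.r.t. $B$ if $S_n^B(p;w)=\emptyset$ for all $n$ and all such $w$ with $\vec g(n,w)\ge\vec v$ componentwise. $d_R$ deletes entries in positions $R$ and reduces (for words: subtract from each remaining letter the number of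 deleted letters smaller than it). $R$ is reversibly deletable for $p$ w.r.t. $B$ if for all $n$ and all such $w$ with $S_n^B(p;w)\ne\emptyset$, $d_R$ is a bijection $S_n^B(p;w)\to S_{n-|R|}^B(d_R(p);d_R(w))$. *)

theory Defs
  imports Main
begin

text \<open>Words and permutations are lists of positive naturals; positions are 1-based
in the paper, 0-based list indices here (converted explicitly).\<close>

definition red :: "nat list \<Rightarrow> nat list" where
  "red w = map (\<lambda>x. card {y \<in> set w. y \<le> x}) w"

definition is_perm :: "nat \<Rightarrow> nat list \<Rightarrow> bool" where
  "is_perm n \<pi> \<longleftrightarrow> length \<pi> = n \<and> distinct \<pi> \<and> set \<pi> = {1..n}"

text \<open>Vincular pattern (sigma, X): X \<subseteq> {1..l-1}; x \<in> X forces i_(x+1) = i_x + 1.\<close>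
definition contains_vinc :: "nat list \<Rightarrow> nat list \<times> nat set \<Rightarrow> bool" where
  "contains_vinc \<pi> P \<longleftrightarrow> (case P of (\<sigma>, X) \<Rightarrow>
     (\<exists>is. length is = length \<sigma> \<and> sorted_wrt (<) is \<and> (\<forall>i\<in>set is. i < length \<pi>) \<and>
        red (map (\<lambda>i. \<pi> ! i) is) = \<sigma> \<and>
        (\<forall>x\<in>X. is ! x = is ! (x - 1) + 1)))"

definition avoids :: "(nat list \<times> nat set) set \<Rightarrow> nat list \<Rightarrow> bool" where
  "avoids B \<pi> \<longleftrightarrow> (\<forall>P\<in>B. \<not> contains_vinc \<pi> P)"

definition adm_word :: "nat \<Rightarrow> nat list \<Rightarrow> nat list \<Rightarrow> bool" where
  "adm_word n p w \<longleftrightarrow> length w = length p \<and> distinct w \<and> set w \<subseteq> {1..n} \<and> red w = p"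

definition SnB :: "nat \<Rightarrow> (nat list \<times> nat set) set \<Rightarrow> nat list \<Rightarrow> nat list \<Rightarrow> nat list set" where
  "SnB n B p w = {\<pi>. is_perm n \<pi> \<and> avoids B \<pi> \<and> (\<forall>i<length w. \<pi> ! i = w ! i)}"

text \<open>Spacing vector g(n,w), a list of length k+1 (component i+1 of the paper is entry i).\<close>
definition spacing :: "nat \<Rightarrow> nat list \<Rightarrow> nat list" where
  "spacing n w = (let c = 0 # sort w @ [n + 1] in
      map (\<lambda>i. c ! (i + 1) - c ! i - 1) [0..<length w + 1])"

definition gap_vector :: "nat list \<Rightarrow> nat list \<Rightarrow> (nat list \<times> nat set) set \<Rightarrow> bool" where
  "gap_vector v p B \<longleftrightarrow> length v = length p + 1 \<and>
     (\<forall>n w. adm_word n p w \<and> (\<forall>i < length p + 1. v ! i \<le> spacing n w ! i) \<longrightarrow> SnB n B p w = {})"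

text \<open>d_R: delete entries at (1-based) positions in R, subtract from remaining letters the
number of deleted letters smaller than them (this is reduction for permutations).\<close>
definition dR :: "nat set \<Rightarrow> nat list \<Rightarrow> nat list" where
  "dR R w = (let del = [w ! i. i \<leftarrow> [0..<length w], i + 1 \<in> R];
                 keep = [w ! i. i \<leftarrow> [0..<length w], i + 1 \<notin> R]
             in map (\<lambda>x. x - length (filter (\<lambda>y. y < x) del)) keep)"

definition rev_deletable :: "nat set \<Rightarrow> nat list \<Rightarrow> (nat list \<times> nat set) set \<Rightarrow> bool" where
  "rev_deletable R p B \<longleftrightarrow>
     (\<forall>n w. adm_word n p w \<and> SnB n B p w \<noteq> {} \<longrightarrow>
        bij_betw (dR R) (SnB n B p w) (SnB (n - card R) B (dR R p) (dR R w)))"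

end

theory Submission
  imports Defs
begin

(* Write r = sigma_t - 1 and let w be an admissible prefix, i.e. a word of length t-1
   order-isomorphic to sigma_1 ... sigma_(t-1).  Because the first t-2 gaps of the pattern are
   vincular, an occurrence of (sigma, {1..t-2}) in a permutation pi extending w that uses
   position 1 (list index 0 below) must use all of the first t-1 positions, i.e. w itself,
   together with one later letter x; and
   w x is order-isomorphic to sigma exactly when x has rank r among the letters of w.  Such a letter
   x in [n] exists iff the (r+1)-st component of the spacing vector g(n,w) is positive.  Hence:
   - if g(n,w) dominates v (so that component is positive), every pi extending w contains the
     pattern, and v is a gap vector;
   - if some avoider extending w exists, that component is 0, so no extension of w has an
     occurrence through position 1; then deleting the first letter is a bijection, since every
     other occurrence survives the deletion and reinsertion of the first letter. *)

definition rank :: "nat set \<Rightarrow> nat \<Rightarrow> nat" where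
  "rank A x = card {y \<in> A. y < x}"

lemma is_perm_iff_subset:
  "is_perm n l \<longleftrightarrow> length l = n \<and> distinct l \<and> set l \<subseteq> {1..n}"
  unfolding is_perm_def
  using card_subset_eq[of "{1..n}" "set l"] distinct_card[of l] by auto

lemma card_filter_insert:
  assumes "finite S" "x \<notin> S"
  shows "card {y \<in> insert x S. P y} = card {y \<in> S. P y} + (if P x then 1 else 0)"
proof (cases "P x")
  case True
  then have "{y \<in> insert x S. P y} = insert x {y \<in> S. P y}" by auto
  then show ?thesis using assms True by simp
next
  case False
  then have "{y \<in> insert x S. P y} = {y \<in> S. P y}" by auto
  then show ?thesis using False by simp
qed

lemma rank_less_iff:
  assumes "finite S" "x \<notin> S" "a \<in> S"
  shows "x < a \<longleftrightarrow> rank S x < card {y \<in> S. y \<le> a}"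
proof
  assume "x < a"
  then have "{y \<in> S. y < x} \<subseteq> {y \<in> S. y \<le> a}" and "a \<notin> {y \<in> S. y < x}"
    by auto
  then have "{y \<in> S. y < x} \<subset> {y \<in> S. y \<le> a}" using assms(3) by blast
  then show "rank S x < card {y \<in> S. y \<le> a}"
    unfolding rank_def using assms(1) by (simp add: psubset_card_mono)
next
  assume less: "rank S x < card {y \<in> S. y \<le> a}"
  show "x < a"
  proof (rule ccontr)
    assume "\<not> x < a"
    moreover have "x \<noteq> a" using assms(2,3) by blast
    ultimately have "{y \<in> S. y \<le> a} \<subseteq> {y \<in> S. y < x}" by auto
    then have "card {y \<in> S. y \<le> a} \<le> rank S x"
      unfolding rank_def using assms(1) by (simp add: card_mono)
    then show False using less by simp
  qed
qed

lemma length_red [simp]: "length (red w) = length w"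
  by (simp add: red_def)

lemma red_nth: "i < length w \<Longrightarrow> red w ! i = card {y \<in> set w. y \<le> w ! i}"
  by (simp add: red_def)

lemma red_snoc_nth:
  assumes "x \<notin> set w" "i < length w"
  shows "red (w @ [x]) ! i = red w ! i + (if rank (set w) x < red w ! i then 1 else 0)"
proof -
  have wi: "w ! i \<in> set w" using assms(2) by simp
  then have "x \<le> w ! i \<longleftrightarrow> rank (set w) x < red w ! i"
    using rank_less_iff[of "set w" x "w ! i"] assms red_nth[of i w] by (auto simp: le_less)
  moreover have "red (w @ [x]) ! i = card {y \<in> insert x (set w). y \<le> w ! i}"
    using assms(2) by (simp add: red_def nth_append)
  ultimately show ?thesis
    using card_filter_insert[of "set w" x] assms red_nth[of i w] by simp
qed

lemma red_snoc_last:
  assumes "x \<notin> set w"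
  shows "red (w @ [x]) ! length w = Suc (rank (set w) x)"
proof -
  have "{y \<in> insert x (set w). y \<le> x} = insert x {y \<in> set w. y < x}"
    using assms by auto
  then have "red (w @ [x]) ! length w = card (insert x {y \<in> set w. y < x})"
    by (simp add: red_def nth_append)
  then show ?thesis using assms by (simp add: rank_def)
qed

lemma red_snoc_eq:
  assumes "length w = length u" "red w = red u" "x \<notin> set w" "k \<notin> set u"
    and "rank (set w) x = rank (set u) k"
  shows "red (w @ [x]) = red (u @ [k])"
proof (rule nth_equalityI)
  fix i assume "i < length (red (w @ [x]))"
  then consider "i < length w" | "i = length w" by fastforce
  then show "red (w @ [x]) ! i = red (u @ [k]) ! i"
  proof cases
    case 1
    then show ?thesis using assms red_snoc_nth[of x w i] red_snoc_nth[of k u i] by simp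
  next
    case 2
    then show ?thesis using assms red_snoc_last[of x w] red_snoc_last[of k u] by simp
  qed
qed (use assms(1) in simp)

lemma red_perm:
  assumes "is_perm n \<sigma>"
  shows "red \<sigma> = \<sigma>"
  unfolding red_def
proof (rule map_idI)
  fix x assume "x \<in> set \<sigma>"
  then have "{y \<in> set \<sigma>. y \<le> x} = {1..x}" using assms by (auto simp: is_perm_def)
  then show "card {y \<in> set \<sigma>. y \<le> x} = x" by simp
qed

lemma red_map:
  assumes "strict_mono_on A g" "set u \<subseteq> A"
  shows "red (map g u) = red u"
proof -
  have le: "g y \<le> g x \<longleftrightarrow> y \<le> x" if "x \<in> A" "y \<in> A" for x y
    using assms(1) that by (metis linorder_not_le strict_mono_onD order_le_less)
  have "card {y \<in> g ` set u. y \<le> g x} = card {y \<in> set u. y \<le> x}" if x: "x \<in> set u" for x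
  proof -
    have "{y \<in> g ` set u. y \<le> g x} = g ` {y \<in> set u. y \<le> x}" using le x assms(2) by auto
    moreover have "inj_on g {y \<in> set u. y \<le> x}"
      using strict_mono_on_imp_inj_on[OF assms(1)] assms(2) by (auto intro: inj_on_subset)
    ultimately show ?thesis by (simp add: card_image)
  qed
  then show ?thesis unfolding red_def by simp
qed

lemma last_letter_extension:
  assumes \<sigma>: "is_perm t \<sigma>" "0 < t"
    and w: "length w = t - 1" "red w = red (take (t - 1) \<sigma>)" "x \<notin> set w"
  shows "red (w @ [x]) = \<sigma> \<longleftrightarrow> rank (set w) x = \<sigma> ! (t - 1) - 1"
proof -
  define u where "u = take (t - 1) \<sigma>"
  define k where "k = \<sigma> ! (t - 1)"
  have len: "length \<sigma> = t" using \<sigma> by (simp add: is_perm_def)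
  then have split: "\<sigma> = u @ [k]"
    unfolding u_def k_def using \<sigma>(2) take_Suc_conv_app_nth[of "t - 1" \<sigma>] by simp
  have ku: "k \<notin> set u" and set_\<sigma>: "set \<sigma> = {1..t}"
    using \<sigma> split by (auto simp: is_perm_def)
  have "{y \<in> set u. y < k} = {1..<k}"
  proof -
    have "k \<in> set \<sigma>" using split by simp
    then have "k \<in> {1..t}" using set_\<sigma> by blast
    then show ?thesis using set_\<sigma> split ku by auto
  qed
  then have rank_k: "rank (set u) k = k - 1" by (simp add: rank_def)
  have lu: "length u = t - 1" unfolding u_def using len by simp
  show ?thesis
  proof
    assume "red (w @ [x]) = \<sigma>"
    then have "Suc (rank (set w) x) = \<sigma> ! length w"
      using red_snoc_last[OF w(3)] by simp
    then have "Suc (rank (set w) x) = k" using w(1) unfolding k_def by simp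
    then show "rank (set w) x = \<sigma> ! (t - 1) - 1" unfolding k_def by simp
  next
    assume "rank (set w) x = \<sigma> ! (t - 1) - 1"
    then have "red (w @ [x]) = red (u @ [k])"
      using red_snoc_eq[of w u x k] w lu ku rank_k unfolding u_def k_def by simp
    then show "red (w @ [x]) = \<sigma>" using split red_perm[OF \<sigma>(1)] by simp
  qed
qed

lemma sorted_rank_ge_iff:
  assumes s: "sorted_wrt (<) s" and r: "0 < r" "r \<le> length s"
  shows "r \<le> rank (set s) x \<longleftrightarrow> s ! (r - 1) < x"
proof
  have sorted: "sorted s" using s strict_sorted_iff by blast
  assume ge: "r \<le> rank (set s) x"
  show "s ! (r - 1) < x"
  proof (rule ccontr)
    assume "\<not> s ! (r - 1) < x"
    then have above: "x \<le> s ! (r - 1)" by simp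
    have "{y \<in> set s. y < x} \<subseteq> (\<lambda>j. s ! j) ` {..<r - 1}"
    proof
      fix y assume "y \<in> {y \<in> set s. y < x}"
      then obtain j where j: "j < length s" "y = s ! j" "s ! j < x" by (auto simp: in_set_conv_nth)
      have "j < r - 1"
      proof (rule ccontr)
        assume "\<not> j < r - 1"
        then have "s ! (r - 1) \<le> s ! j" using sorted_nth_mono[OF sorted] j(1) by simp
        then show False using j(3) above by simp
      qed
      then show "y \<in> (\<lambda>j. s ! j) ` {..<r - 1}" using j(2) by simp
    qed
    then have "rank (set s) x \<le> card ((\<lambda>j. s ! j) ` {..<r - 1})"
      unfolding rank_def by (simp add: card_mono)
    also have "\<dots> \<le> r - 1" using card_image_le[of "{..<r - 1}" "\<lambda>j. s ! j"] by simp
    finally show False using ge r by linarith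
  qed
next
  assume below: "s ! (r - 1) < x"
  have "(\<lambda>j. s ! j) ` {..<r} \<subseteq> {y \<in> set s. y < x}"
  proof
    fix y assume "y \<in> (\<lambda>j. s ! j) ` {..<r}"
    then obtain j where j: "j < r" "y = s ! j" by auto
    then have "s ! j \<le> s ! (r - 1)"
      using sorted_nth_mono[of s j "r - 1"] strict_sorted_iff[of s] s r by simp
    then show "y \<in> {y \<in> set s. y < x}" using j r below by auto
  qed
  moreover have "inj_on (\<lambda>j. s ! j) {..<r}"
    using inj_on_nth[of s "{..<r}"] s r strict_sorted_iff[of s] by simp
  ultimately have "card ((\<lambda>j. s ! j) ` {..<r}) \<le> rank (set s) x"
    unfolding rank_def by (simp add: card_mono)
  moreover have "card ((\<lambda>j. s ! j) ` {..<r}) = r"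
    using \<open>inj_on (\<lambda>j. s ! j) {..<r}\<close> by (simp add: card_image)
  ultimately show "r \<le> rank (set s) x" by simp
qed

lemma sorted_rank_eq_iff:
  assumes s: "sorted_wrt (<) s" and r: "r \<le> length s"
  shows "rank (set s) x = r \<longleftrightarrow> (0 < r \<longrightarrow> s ! (r - 1) < x) \<and> (r < length s \<longrightarrow> x \<le> s ! r)"
proof -
  have "rank (set s) x \<le> card (set s)" unfolding rank_def by (simp add: card_mono)
  then have bounded: "rank (set s) x \<le> length s"
    using s strict_sorted_iff distinct_card by metis
  have lower: "r \<le> rank (set s) x \<longleftrightarrow> (0 < r \<longrightarrow> s ! (r - 1) < x)"
    using sorted_rank_ge_iff[OF s, of r x] r by (cases "r = 0") auto
  have upper: "Suc r \<le> rank (set s) x \<longleftrightarrow> r < length s \<and> s ! r < x"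
    using sorted_rank_ge_iff[OF s, of "Suc r" x] bounded by auto
  show ?thesis using lower upper r by (auto simp: not_less)
qed

lemma boundary_nth:
  assumes "r \<le> length s"
  shows "(0 # s @ [m]) ! r = (if r = 0 then 0 else s ! (r - 1))"
    and "(0 # s @ [m]) ! Suc r = (if r < length s then s ! r else m)"
  using assms by (auto simp: nth_Cons' nth_append)

lemma rank_window:
  assumes s: "sorted_wrt (<) s" and r: "r \<le> length s"
    and x: "x \<in> {1..n}" "x \<notin> set s"
  shows "rank (set s) x = r \<longleftrightarrow>
           (0 # s @ [n + 1]) ! r < x \<and> x < (0 # s @ [n + 1]) ! Suc r"
proof -
  have "x \<le> s ! r \<longleftrightarrow> x < s ! r" if "r < length s"
    using that x(2) nth_mem[of r s] by (auto simp: le_less)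
  then show ?thesis
    unfolding sorted_rank_eq_iff[OF s r] boundary_nth[OF r] using x(1) by auto
qed

lemma spacing_nth:
  assumes "r \<le> length w"
  shows "spacing n w ! r = (0 # sort w @ [n + 1]) ! Suc r - (0 # sort w @ [n + 1]) ! r - 1"
  using assms unfolding spacing_def Let_def by (simp add: nth_map nth_upt del: upt_Suc)

lemma between_boundaries:
  fixes s :: "nat list"
  assumes s: "sorted_wrt (<) s" "set s \<subseteq> {1..n}" and r: "r \<le> length s"
    and x: "(0 # s @ [n + 1]) ! r < x" "x < (0 # s @ [n + 1]) ! Suc r"
  shows "x \<in> {1..n}" and "x \<notin> set s"
proof -
  have "(0 # s @ [n + 1]) ! Suc r \<le> n + 1"
  proof (cases "r < length s")
    case True
    then have "s ! r \<in> {1..n}" using s(2) nth_mem by blast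
    then show ?thesis using True boundary_nth(2)[OF r] by simp
  qed (use boundary_nth(2)[OF r] in simp)
  then show "x \<in> {1..n}" using x by simp
  show "x \<notin> set s"
  proof
    assume "x \<in> set s"
    then obtain j where j: "j < length s" "x = s ! j" by (auto simp: in_set_conv_nth)
    have sorted: "sorted s" using s(1) strict_sorted_iff by blast
    show False
    proof (cases "j < r")
      case True
      then have "s ! j \<le> s ! (r - 1)" using sorted_nth_mono[OF sorted, of j "r - 1"] r by simp
      then show False using True j(2) x(1) boundary_nth(1)[OF r] by simp
    next
      case False
      then have "s ! r \<le> s ! j" using sorted_nth_mono[OF sorted, of r j] j(1) by simp
      then show False using False j x(2) boundary_nth(2)[OF r] by simp
    qed
  qed
qed

lemma spacing_pos_iff:
  assumes w: "distinct w" "set w \<subseteq> {1..n}" and r: "r \<le> length w"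
  shows "1 \<le> spacing n w ! r \<longleftrightarrow> (\<exists>x\<in>{1..n}. x \<notin> set w \<and> rank (set w) x = r)"
proof -
  define s where "s = sort w"
  define c where "c = 0 # s @ [n + 1]"
  have s: "sorted_wrt (<) s" "set s = set w" "length s = length w"
    unfolding s_def using w(1) by (auto simp: strict_sorted_iff)
  have rs: "r \<le> length s" using r s(3) by simp
  have window: "rank (set w) x = r \<longleftrightarrow> c ! r < x \<and> x < c ! Suc r"
    if "x \<in> {1..n}" "x \<notin> set w" for x
    using rank_window[OF s(1) rs, of x n] that s(2) unfolding c_def by simp
  have gap: "spacing n w ! r = c ! Suc r - c ! r - 1"
    using spacing_nth[OF r] unfolding c_def s_def by simp
  show ?thesis
  proof
    assume "1 \<le> spacing n w ! r"
    then have "c ! r < c ! r + 1" "c ! r + 1 < c ! Suc r" using gap by simp_all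
    then have "c ! r + 1 \<in> {1..n}" "c ! r + 1 \<notin> set w"
      using between_boundaries[OF s(1) _ rs] w(2) s(2) unfolding c_def by simp_all
    then show "\<exists>x\<in>{1..n}. x \<notin> set w \<and> rank (set w) x = r"
      using window \<open>c ! r + 1 < c ! Suc r\<close> by auto
  next
    assume "\<exists>x\<in>{1..n}. x \<notin> set w \<and> rank (set w) x = r"
    then show "1 \<le> spacing n w ! r" using window gap by fastforce
  qed
qed

definition occurrence :: "nat list \<Rightarrow> nat list \<Rightarrow> nat set \<Rightarrow> nat list \<Rightarrow> bool" where
  "occurrence \<pi> \<sigma> X is \<longleftrightarrow> length is = length \<sigma> \<and> sorted_wrt (<) is \<and>
     (\<forall>i\<in>set is. i < length \<pi>) \<and> red (map (\<lambda>i. \<pi> ! i) is) = \<sigma> \<and>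
     (\<forall>x\<in>X. is ! x = is ! (x - 1) + 1)"

lemma contains_vinc_iff: "contains_vinc \<pi> (\<sigma>, X) \<longleftrightarrow> (\<exists>is. occurrence \<pi> \<sigma> X is)"
  by (simp add: contains_vinc_def occurrence_def)

lemma occurrence_map:
  assumes "strict_mono_on (set \<pi>) g"
  shows "occurrence (map g \<pi>) \<sigma> X is \<longleftrightarrow> occurrence \<pi> \<sigma> X is"
proof -
  have "red (map (\<lambda>i. map g \<pi> ! i) is) = red (map (\<lambda>i. \<pi> ! i) is)"
    if "\<forall>i\<in>set is. i < length \<pi>"
  proof -
    have map_eq: "map (\<lambda>i. map g \<pi> ! i) is = map g (map (\<lambda>i. \<pi> ! i) is)" using that by simp
    have "set (map (\<lambda>i. \<pi> ! i) is) \<subseteq> set \<pi>" using that by auto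
    then show ?thesis unfolding map_eq by (rule red_map[OF assms])
  qed
  then show ?thesis unfolding occurrence_def by auto
qed

lemma occurrence_Cons_shift:
  assumes occ: "occurrence \<pi> \<sigma> X is" and X: "X \<subseteq> {..<length \<sigma>}"
  shows "occurrence (a # \<pi>) \<sigma> X (map Suc is)"
proof -
  have "map Suc is ! x = map Suc is ! (x - 1) + 1" if "x \<in> X" for x
  proof -
    have "x < length is" using occ X that unfolding occurrence_def by auto
    then show ?thesis using occ that unfolding occurrence_def by simp
  qed
  moreover have "map (\<lambda>i. (a # \<pi>) ! i) (map Suc is) = map (\<lambda>i. \<pi> ! i) is" by simp
  moreover have "sorted_wrt (<) (map Suc is)"
    using occ by (simp add: occurrence_def sorted_wrt_map)
  ultimately show ?thesis using occ unfolding occurrence_def by (simp add: comp_def)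
qed

lemma occurrence_Cons_unshift:
  assumes occ: "occurrence (a # \<pi>) \<sigma> X is" and X: "X \<subseteq> {..<length \<sigma>}" and no0: "0 \<notin> set is"
  shows "occurrence \<pi> \<sigma> X (map (\<lambda>i. i - 1) is)"
proof -
  have len: "length is = length \<sigma>" and sorted: "sorted_wrt (<) is"
    and bound: "\<forall>i\<in>set is. i < Suc (length \<pi>)"
    and red_eq: "red (map (\<lambda>i. (a # \<pi>) ! i) is) = \<sigma>"
    and vinc: "\<forall>x\<in>X. is ! x = is ! (x - 1) + 1"
    using occ unfolding occurrence_def by simp_all
  have pos: "0 < i" if "i \<in> set is" for i using that no0 by (metis gr0I)
  have "sorted_wrt (\<lambda>i j. i - 1 < j - 1) is"
  proof (rule sorted_wrt_mono_rel[OF _ sorted])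
    fix i j assume "i \<in> set is" "j \<in> set is" "i < j"
    then show "i - 1 < j - 1" using pos[of i] by linarith
  qed
  moreover have "red (map (\<lambda>i. \<pi> ! (i - 1)) is) = \<sigma>"
  proof -
    have "map (\<lambda>i. (a # \<pi>) ! i) is = map (\<lambda>i. \<pi> ! (i - 1)) is"
      using pos by (auto simp: nth_Cons')
    then show ?thesis using red_eq by metis
  qed
  moreover have "map (\<lambda>i. i - 1) is ! x = map (\<lambda>i. i - 1) is ! (x - 1) + 1" if "x \<in> X" for x
  proof -
    have "x < length is" using subsetD[OF X that] len by simp
    moreover from this have "0 < is ! (x - 1)" using pos nth_mem by simp
    ultimately show ?thesis using vinc that by simp
  qed
  moreover have "i - 1 < length \<pi>" if "i \<in> set is" for i
    using bound pos[OF that] that by fastforce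
  ultimately show ?thesis
    using len unfolding occurrence_def by (simp add: sorted_wrt_map comp_def)
qed

lemma contains_vinc_map:
  assumes "strict_mono_on (set \<pi>) g"
  shows "contains_vinc (map g \<pi>) (\<sigma>, X) \<longleftrightarrow> contains_vinc \<pi> (\<sigma>, X)"
  unfolding contains_vinc_iff occurrence_map[OF assms] ..

lemma contains_vinc_Cons_iff:
  assumes X: "X \<subseteq> {..<length \<sigma>}"
  shows "contains_vinc (a # \<pi>) (\<sigma>, X) \<longleftrightarrow>
           contains_vinc \<pi> (\<sigma>, X) \<or> (\<exists>is. occurrence (a # \<pi>) \<sigma> X is \<and> 0 \<in> set is)"
proof
  assume "contains_vinc (a # \<pi>) (\<sigma>, X)"
  then obtain "is" where occ: "occurrence (a # \<pi>) \<sigma> X is" unfolding contains_vinc_iff by blast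
  show "contains_vinc \<pi> (\<sigma>, X) \<or> (\<exists>is. occurrence (a # \<pi>) \<sigma> X is \<and> 0 \<in> set is)"
  proof (cases "0 \<in> set is")
    case False
    then show ?thesis using occurrence_Cons_unshift[OF occ X] unfolding contains_vinc_iff by blast
  qed (use occ in blast)
next
  assume "contains_vinc \<pi> (\<sigma>, X) \<or> (\<exists>is. occurrence (a # \<pi>) \<sigma> X is \<and> 0 \<in> set is)"
  then show "contains_vinc (a # \<pi>) (\<sigma>, X)"
    using occurrence_Cons_shift[OF _ X] unfolding contains_vinc_iff by blast
qed

lemma start_occurrence_indices:
  assumes occ: "occurrence \<pi> \<sigma> {1..t - 2} is" and zero: "0 \<in> set is"
    and t: "length \<sigma> = t" "2 \<le> t"
  shows "\<exists>j. t - 1 \<le> j \<and> j < length \<pi> \<and> is = [0..<t - 1] @ [j]"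
proof -
  have len: "length is = t" and sorted: "sorted_wrt (<) is"
    and bound: "\<forall>i\<in>set is. i < length \<pi>" and vinc: "\<forall>x\<in>{1..t - 2}. is ! x = is ! (x - 1) + 1"
    using occ t unfolding occurrence_def by simp_all
  have first: "is ! 0 = 0"
  proof -
    obtain j where j: "j < length is" "is ! j = 0" using zero by (auto simp: in_set_conv_nth)
    then show ?thesis using sorted_wrt_nth_less[OF sorted, of 0 j] by (cases j) auto
  qed
  have initial: "is ! i = i" if "i \<le> t - 2" for i
    using that
  proof (induction i)
    case (Suc i)
    then show ?case using vinc by fastforce
  qed (use first in simp)
  define j where "j = is ! (t - 1)"
  have "is ! (t - 2) < j" unfolding j_def using sorted_wrt_nth_less[OF sorted] len t by simp
  then have "t - 1 \<le> j" using initial[of "t - 2"] t by simp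
  moreover have "j < length \<pi>" unfolding j_def using bound len t by simp
  moreover have "is = [0..<t - 1] @ [j]"
  proof (rule nth_equalityI)
    fix i assume "i < length is"
    then consider "i < t - 1" | "i = t - 1" using len by linarith
    then show "is ! i = ([0..<t - 1] @ [j]) ! i"
      by cases (use initial t in \<open>auto simp: nth_append j_def\<close>)
  qed (use len t in simp)
  ultimately show ?thesis by blast
qed

lemma prefix_occurrence:
  assumes t: "length \<sigma> = t" "0 < t" and j: "t - 1 \<le> j" "j < length \<pi>"
    and red_eq: "red (map (\<lambda>i. \<pi> ! i) ([0..<t - 1] @ [j])) = \<sigma>"
  shows "occurrence \<pi> \<sigma> {1..t - 2} ([0..<t - 1] @ [j])"
  unfolding occurrence_def
proof (intro conjI ballI)
  show "length ([0..<t - 1] @ [j]) = length \<sigma>" using t j by simp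
  show "i < length \<pi>" if "i \<in> set ([0..<t - 1] @ [j])" for i
    using that j by auto
  show "sorted_wrt (<) ([0..<t - 1] @ [j])"
    using j by (auto simp: sorted_wrt_append)
  show "red (map (\<lambda>i. \<pi> ! i) ([0..<t - 1] @ [j])) = \<sigma>" by (rule red_eq)
  fix x assume "x \<in> {1..t - 2}"
  then show "([0..<t - 1] @ [j]) ! x = ([0..<t - 1] @ [j]) ! (x - 1) + 1"
    by (auto simp: nth_append)
qed

lemma start_occurrence_iff:
  assumes \<pi>: "distinct \<pi>" and prefix: "\<forall>i<length w. \<pi> ! i = w ! i"
    and t: "length w = t - 1" "length \<sigma> = t" "2 \<le> t"
  shows "(\<exists>is. occurrence \<pi> \<sigma> {1..t - 2} is \<and> 0 \<in> set is) \<longleftrightarrow>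
           (\<exists>x\<in>set \<pi>. x \<notin> set w \<and> red (w @ [x]) = \<sigma>)"
proof
  have "map (\<lambda>i. \<pi> ! i) [0..<t - 1] = w" by (rule nth_equalityI) (use prefix t in auto)
  then have pattern: "map (\<lambda>i. \<pi> ! i) ([0..<t - 1] @ [j]) = w @ [\<pi> ! j]" for j by simp
  {
    assume "\<exists>is. occurrence \<pi> \<sigma> {1..t - 2} is \<and> 0 \<in> set is"
    then obtain j where j: "t - 1 \<le> j" "j < length \<pi>"
      and occ: "occurrence \<pi> \<sigma> {1..t - 2} ([0..<t - 1] @ [j])"
      using start_occurrence_indices t by blast
    have "\<pi> ! j \<notin> set w"
    proof
      assume "\<pi> ! j \<in> set w"
      then obtain i where "i < t - 1" "\<pi> ! j = \<pi> ! i" using prefix t by (auto simp: in_set_conv_nth)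
      then show False using \<pi> j nth_eq_iff_index_eq[OF \<pi>, of j i] by simp
    qed
    moreover have "red (w @ [\<pi> ! j]) = \<sigma>" using occ pattern[of j] by (simp add: occurrence_def)
    ultimately show "\<exists>x\<in>set \<pi>. x \<notin> set w \<and> red (w @ [x]) = \<sigma>" using j(2) by auto
  }
  assume "\<exists>x\<in>set \<pi>. x \<notin> set w \<and> red (w @ [x]) = \<sigma>"
  then obtain j where j: "j < length \<pi>" "\<pi> ! j \<notin> set w" "red (w @ [\<pi> ! j]) = \<sigma>"
    by (auto simp: in_set_conv_nth)
  have "t - 1 \<le> j"
  proof (rule ccontr)
    assume "\<not> t - 1 \<le> j"
    then show False using j(2) prefix t by (metis not_le nth_mem)
  qed
  then have "occurrence \<pi> \<sigma> {1..t - 2} ([0..<t - 1] @ [j])"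
    using prefix_occurrence[of \<sigma> t j \<pi>] t j(1,3) pattern by simp
  moreover have "0 \<in> set ([0..<t - 1] @ [j])" using t by simp
  ultimately show "\<exists>is. occurrence \<pi> \<sigma> {1..t - 2} is \<and> 0 \<in> set is" by blast
qed

definition del_std :: "nat \<Rightarrow> nat \<Rightarrow> nat" where
  "del_std a x = (if a < x then x - 1 else x)"

definition ins_std :: "nat \<Rightarrow> nat \<Rightarrow> nat" where
  "ins_std a y = (if a \<le> y then y + 1 else y)"

lemma del_ins_std [simp]: "del_std a (ins_std a y) = y"
  by (simp add: del_std_def ins_std_def)

lemma ins_del_std: "x \<noteq> a \<Longrightarrow> ins_std a (del_std a x) = x"
  by (auto simp: del_std_def ins_std_def)

lemma ins_std_neq: "ins_std a y \<noteq> a"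
  by (simp add: ins_std_def)

lemma strict_mono_ins_std: "strict_mono_on A (ins_std a)"
  by (rule strict_mono_onI) (auto simp: ins_std_def)

lemma strict_mono_del_std:
  assumes "a \<notin> A"
  shows "strict_mono_on A (del_std a)"
proof (rule strict_mono_onI)
  fix r s assume "r \<in> A" "s \<in> A" "r < s"
  moreover have "r \<noteq> a" "s \<noteq> a" using assms calculation by auto
  ultimately show "del_std a r < del_std a s" by (auto simp: del_std_def)
qed

lemma dR_first: "dR {1} (a # l) = map (del_std a) l"
proof -
  have upt: "[0..<length (a # l)] = 0 # map Suc [0..<length l]"
    by (simp add: map_Suc_upt upt_conv_Cons del: upt_Suc)
  have deleted: "[(a # l) ! i. i \<leftarrow> [0..<length (a # l)], i + 1 \<in> {1}] = [a]"
    unfolding upt by simp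
  have "[(a # l) ! i. i \<leftarrow> [0..<length (a # l)], i + 1 \<notin> {1}] = map (\<lambda>i. l ! i) [0..<length l]"
    unfolding upt by (simp add: comp_def)
  then have kept: "[(a # l) ! i. i \<leftarrow> [0..<length (a # l)], i + 1 \<notin> {1}] = l"
    by (simp add: map_nth)
  show ?thesis unfolding dR_def Let_def deleted kept by (auto simp: del_std_def)
qed

lemma is_perm_delete_first:
  assumes "is_perm n (a # l)"
  shows "is_perm (n - 1) (map (del_std a) l)"
proof -
  have a: "a \<notin> set l" "distinct l" "length l = n - 1" and l: "set (a # l) \<subseteq> {1..n}"
    using assms by (auto simp: is_perm_iff_subset)
  have "distinct (map (del_std a) l)"
    using a strict_mono_on_imp_inj_on[OF strict_mono_del_std[OF a(1)]] by (simp add: distinct_map)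
  moreover have "del_std a x \<in> {1..n - 1}" if "x \<in> set l" for x
  proof -
    have "x \<noteq> a" using that a(1) by blast
    then show ?thesis using l that by (auto simp: del_std_def)
  qed
  ultimately show ?thesis using a(3) by (auto simp: is_perm_iff_subset)
qed

lemma is_perm_insert_first:
  assumes "a \<in> {1..n}" "is_perm (n - 1) \<rho>"
  shows "is_perm n (a # map (ins_std a) \<rho>)"
proof -
  have \<rho>: "distinct \<rho>" "length \<rho> = n - 1" "set \<rho> \<subseteq> {1..n - 1}"
    using assms(2) by (auto simp: is_perm_iff_subset)
  have "distinct (map (ins_std a) \<rho>)"
    using \<rho>(1) strict_mono_on_imp_inj_on[OF strict_mono_ins_std] by (simp add: distinct_map)
  moreover have "ins_std a y \<in> {1..n}" if "y \<in> set \<rho>" for y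
    using \<rho>(3) that assms(1) by (auto simp: ins_std_def)
  moreover have "a \<notin> set (map (ins_std a) \<rho>)" using ins_std_neq[of a] by (metis ex_map_conv)
  ultimately show ?thesis using assms(1) \<rho>(2) by (auto simp: is_perm_iff_subset)
qed

lemma prefix_Cons_iff:
  "(\<forall>i<length (a # w). (b # l) ! i = (a # w) ! i) \<longleftrightarrow> b = a \<and> (\<forall>i<length w. l ! i = w ! i)"
  by (auto simp: less_Suc_eq_0_disj)

(* Deleting the first letter maps avoiders extending a # w to avoiders extending
   dR {1} (a # w): an occurrence in the shorter permutation would lift to the longer one.
   (The set SnB n B p w does not depend on p, hence the arbitrary q.) *)
lemma SnB_delete_first:
  assumes X: "X \<subseteq> {..<length \<sigma>}" and len: "length w < n"
    and \<pi>: "a # l \<in> SnB n {(\<sigma>, X)} p (a # w)"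
  shows "map (del_std a) l \<in> SnB (n - 1) {(\<sigma>, X)} q (map (del_std a) w)"
proof -
  have perm: "is_perm n (a # l)" and avoid: "\<not> contains_vinc (a # l) (\<sigma>, X)"
    and prefix: "\<forall>i<length w. l ! i = w ! i"
    using \<pi> prefix_Cons_iff[of a w a l] by (auto simp: SnB_def avoids_def)
  have a: "a \<notin> set l" and len_l: "length l = n - 1" using perm by (auto simp: is_perm_def)
  have "\<not> contains_vinc (map (del_std a) l) (\<sigma>, X)"
    using avoid contains_vinc_map[OF strict_mono_del_std[OF a]] contains_vinc_Cons_iff[OF X] by blast
  moreover have "\<forall>i<length w. map (del_std a) l ! i = del_std a (w ! i)"
    using prefix len len_l by simp
  ultimately show ?thesis using is_perm_delete_first[OF perm] by (simp add: SnB_def avoids_def)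
qed

lemma SnB_insert_first:
  assumes X: "X \<subseteq> {..<length \<sigma>}" and a: "a \<in> {1..n}" "a \<notin> set w" and len: "length w < n"
    and \<rho>: "\<rho> \<in> SnB (n - 1) {(\<sigma>, X)} q (map (del_std a) w)"
    and no_start: "\<And>\<pi>. is_perm n \<pi> \<Longrightarrow> \<forall>i<length (a # w). \<pi> ! i = (a # w) ! i \<Longrightarrow>
                         \<not> (\<exists>is. occurrence \<pi> \<sigma> X is \<and> 0 \<in> set is)"
  shows "a # map (ins_std a) \<rho> \<in> SnB n {(\<sigma>, X)} p (a # w)"
proof -
  have perm: "is_perm (n - 1) \<rho>" and avoid: "\<not> contains_vinc \<rho> (\<sigma>, X)"
    and prefix: "\<forall>i<length w. \<rho> ! i = del_std a (w ! i)"
    using \<rho> by (auto simp: SnB_def avoids_def)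
  have "length \<rho> = n - 1" using perm by (simp add: is_perm_def)
  have "map (ins_std a) \<rho> ! i = w ! i" if "i < length w" for i
  proof -
    have "i < length \<rho>" using that len \<open>length \<rho> = n - 1\<close> by simp
    moreover have "w ! i \<noteq> a" using that a(2) nth_mem by blast
    ultimately show ?thesis using prefix that ins_del_std by simp
  qed
  then have prefix': "\<forall>i<length (a # w). (a # map (ins_std a) \<rho>) ! i = (a # w) ! i"
    unfolding prefix_Cons_iff by blast
  have perm': "is_perm n (a # map (ins_std a) \<rho>)" using is_perm_insert_first[OF a(1) perm] .
  have "\<not> contains_vinc (a # map (ins_std a) \<rho>) (\<sigma>, X)"
    using avoid contains_vinc_map[OF strict_mono_ins_std] contains_vinc_Cons_iff[OF X]
      no_start[OF perm' prefix'] by blast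
  then show ?thesis using perm' prefix' by (simp add: SnB_def avoids_def)
qed

lemma delete_first_bij:
  assumes X: "X \<subseteq> {..<length \<sigma>}" and w: "distinct (a # w)" "set (a # w) \<subseteq> {1..n}"
    and no_start: "\<And>\<pi>. is_perm n \<pi> \<Longrightarrow> \<forall>i<length (a # w). \<pi> ! i = (a # w) ! i \<Longrightarrow>
                         \<not> (\<exists>is. occurrence \<pi> \<sigma> X is \<and> 0 \<in> set is)"
  shows "bij_betw (dR {1}) (SnB n {(\<sigma>, X)} p (a # w))
           (SnB (n - card {1}) {(\<sigma>, X)} q (dR {1} (a # w)))"
proof -
  have "length (a # w) \<le> n"
    using card_mono[OF _ w(2)] distinct_card[OF w(1)] by simp
  then have len: "length w < n" by simp
  have a: "a \<in> {1..n}" "a \<notin> set w" using w by auto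
  define S where "S = SnB n {(\<sigma>, X)} p (a # w)"
  define T where "T = SnB (n - 1) {(\<sigma>, X)} q (map (del_std a) w)"
  have shape: "\<pi> = a # tl \<pi>" if "\<pi> \<in> S" for \<pi>
  proof -
    have "length \<pi> = n" "\<forall>i<length (a # w). \<pi> ! i = (a # w) ! i"
      using that by (auto simp: S_def SnB_def is_perm_def)
    then show ?thesis using a(1) by (cases \<pi>) (auto simp: prefix_Cons_iff)
  qed
  have "bij_betw (dR {1}) S T"
  proof (rule bij_betw_byWitness[where f' = "\<lambda>\<rho>. a # map (ins_std a) \<rho>"])
    show "\<forall>\<pi>\<in>S. a # map (ins_std a) (dR {1} \<pi>) = \<pi>"
    proof
      fix \<pi> assume \<pi>: "\<pi> \<in> S"
      then obtain l where l: "\<pi> = a # l" using shape by blast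
      have "distinct \<pi>" using \<pi> by (simp add: S_def SnB_def is_perm_def)
      then have "a \<notin> set l" using l by simp
      then have "map (ins_std a) (map (del_std a) l) = l"
        unfolding map_map by (intro map_idI) (metis comp_apply ins_del_std)
      then show "a # map (ins_std a) (dR {1} \<pi>) = \<pi>" unfolding l dR_first by simp
    qed
    show "\<forall>\<rho>\<in>T. dR {1} (a # map (ins_std a) \<rho>) = \<rho>"
      unfolding dR_first by (simp add: map_idI)
    show "dR {1} ` S \<subseteq> T"
      using SnB_delete_first[OF X len] shape dR_first unfolding S_def T_def by (metis image_subsetI)
    show "(\<lambda>\<rho>. a # map (ins_std a) \<rho>) ` T \<subseteq> S"
      using SnB_insert_first[OF X a len _ no_start] unfolding S_def T_def by blast
  qed
  then show ?thesis unfolding dR_first S_def T_def by simp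
qed

lemma start_occurrence_iff_gap:
  assumes t: "2 \<le> t" and \<sigma>: "is_perm t \<sigma>"
    and w: "adm_word n (red (take (t - 1) \<sigma>)) w"
    and \<pi>: "is_perm n \<pi>" and prefix: "\<forall>i<length w. \<pi> ! i = w ! i"
  shows "(\<exists>is. occurrence \<pi> \<sigma> {1..t - 2} is \<and> 0 \<in> set is) \<longleftrightarrow>
           1 \<le> spacing n w ! (\<sigma> ! (t - 1) - 1)"
proof -
  have len_\<sigma>: "length \<sigma> = t" using \<sigma> by (simp add: is_perm_def)
  have len_w: "length w = t - 1" and w_distinct: "distinct w" and w_range: "set w \<subseteq> {1..n}"
    and red_w: "red w = red (take (t - 1) \<sigma>)"
    using w len_\<sigma> by (auto simp: adm_word_def)
  have "\<sigma> ! (t - 1) \<in> set \<sigma>" using len_\<sigma> t by simp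
  then have r: "\<sigma> ! (t - 1) - 1 \<le> length w" using \<sigma> len_w by (auto simp: is_perm_def)
  have "(\<exists>is. occurrence \<pi> \<sigma> {1..t - 2} is \<and> 0 \<in> set is) \<longleftrightarrow>
          (\<exists>x\<in>set \<pi>. x \<notin> set w \<and> red (w @ [x]) = \<sigma>)"
    using start_occurrence_iff[OF _ prefix len_w len_\<sigma> t] \<pi> by (simp add: is_perm_def)
  also have "\<dots> \<longleftrightarrow> (\<exists>x\<in>{1..n}. x \<notin> set w \<and> rank (set w) x = \<sigma> ! (t - 1) - 1)"
    using last_letter_extension[OF \<sigma> _ len_w red_w] \<pi> t by (auto simp: is_perm_def)
  also have "\<dots> \<longleftrightarrow> 1 \<le> spacing n w ! (\<sigma> ! (t - 1) - 1)"
    using spacing_pos_iff[OF w_distinct w_range r] by simp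
  finally show ?thesis .
qed

lemma gap_vector_last_letter:
  assumes t: "2 \<le> t" and \<sigma>: "is_perm t \<sigma>"
  shows "gap_vector (map (\<lambda>i. if i + 1 = \<sigma> ! (t - 1) then 1 else 0) [0..<t])
           (red (take (t - 1) \<sigma>)) {(\<sigma>, {1..t - 2})}"
  unfolding gap_vector_def
proof (intro conjI allI impI)
  define r where "r = \<sigma> ! (t - 1) - 1"
  have len_\<sigma>: "length \<sigma> = t" using \<sigma> by (simp add: is_perm_def)
  then show "length (map (\<lambda>i. if i + 1 = \<sigma> ! (t - 1) then 1 else 0) [0..<t]) =
               length (red (take (t - 1) \<sigma>)) + 1" using t by simp
  have "\<sigma> ! (t - 1) \<in> {1..t}" using \<sigma> len_\<sigma> t nth_mem[of "t - 1" \<sigma>] by (simp add: is_perm_def)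
  then have r: "r < t" "r + 1 = \<sigma> ! (t - 1)" unfolding r_def by auto
  fix n w
  assume "adm_word n (red (take (t - 1) \<sigma>)) w \<and>
    (\<forall>i<length (red (take (t - 1) \<sigma>)) + 1.
        map (\<lambda>i. if i + 1 = \<sigma> ! (t - 1) then 1 else 0) [0..<t] ! i \<le> spacing n w ! i)"
  then have w: "adm_word n (red (take (t - 1) \<sigma>)) w" and gap: "1 \<le> spacing n w ! r"
    using r len_\<sigma> t by (auto dest!: spec[of _ r])
  show "SnB n {(\<sigma>, {1..t - 2})} (red (take (t - 1) \<sigma>)) w = {}"
  proof (rule equals0I)
    fix \<pi> assume "\<pi> \<in> SnB n {(\<sigma>, {1..t - 2})} (red (take (t - 1) \<sigma>)) w"
    then have \<pi>: "is_perm n \<pi>" "\<forall>i<length w. \<pi> ! i = w ! i" and avoid: "\<not> contains_vinc \<pi> (\<sigma>, {1..t - 2})"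
      by (auto simp: SnB_def avoids_def)
    then show False
      using start_occurrence_iff_gap[OF t \<sigma> w \<pi>] gap contains_vinc_iff unfolding r_def by blast
  qed
qed

(* Second half: if some avoider exists, the gap at the slot of sigma_t is zero,
   so no extension has an occurrence through position 0 and the deletion criterion applies. *)
lemma first_letter_deletable:
  assumes t: "2 \<le> t" and \<sigma>: "is_perm t \<sigma>"
  shows "rev_deletable {1} (red (take (t - 1) \<sigma>)) {(\<sigma>, {1..t - 2})}"
  unfolding rev_deletable_def
proof (intro allI impI)
  fix n w
  assume "adm_word n (red (take (t - 1) \<sigma>)) w \<and> SnB n {(\<sigma>, {1..t - 2})} (red (take (t - 1) \<sigma>)) w \<noteq> {}"
  then have w: "adm_word n (red (take (t - 1) \<sigma>)) w"
    and nonempty: "SnB n {(\<sigma>, {1..t - 2})} (red (take (t - 1) \<sigma>)) w \<noteq> {}" by auto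
  have len_\<sigma>: "length \<sigma> = t" using \<sigma> by (simp add: is_perm_def)
  then have X: "{1..t - 2} \<subseteq> {..<length \<sigma>}" by auto
  obtain \<pi>\<^sub>0 where \<pi>\<^sub>0: "is_perm n \<pi>\<^sub>0" "\<forall>i<length w. \<pi>\<^sub>0 ! i = w ! i"
    and avoid: "\<not> contains_vinc \<pi>\<^sub>0 (\<sigma>, {1..t - 2})"
    using nonempty by (auto simp: SnB_def avoids_def)
  then have "\<not> 1 \<le> spacing n w ! (\<sigma> ! (t - 1) - 1)"
    using start_occurrence_iff_gap[OF t \<sigma> w \<pi>\<^sub>0] contains_vinc_iff by blast
  then have no_start: "\<not> (\<exists>is. occurrence \<pi> \<sigma> {1..t - 2} is \<and> 0 \<in> set is)"
    if "is_perm n \<pi>" "\<forall>i<length w. \<pi> ! i = w ! i" for \<pi>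
    using start_occurrence_iff_gap[OF t \<sigma> w that] by blast
  have "length w = t - 1" using w len_\<sigma> by (simp add: adm_word_def)
  then obtain a w' where aw: "w = a # w'" using t by (cases w) auto
  have "distinct (a # w')" "set (a # w') \<subseteq> {1..n}" using w aw by (auto simp: adm_word_def)
  from delete_first_bij[OF X this no_start]
  show "bij_betw (dR {1}) (SnB n {(\<sigma>, {1..t - 2})} (red (take (t - 1) \<sigma>)) w)
          (SnB (n - card {1}) {(\<sigma>, {1..t - 2})} (dR {1} (red (take (t - 1) \<sigma>))) (dR {1} w))"
    unfolding aw by blast
qed

theorem mainTheorem6:
  fixes t :: nat and \<sigma> :: "nat list"
  assumes "t \<ge> 2" and "is_perm t \<sigma>"
  defines "p \<equiv> red (take (t - 1) \<sigma>)"
      and "v \<equiv> map (\<lambda>i. if i + 1 = \<sigma> ! (t - 1) then 1 else 0) [0..<t]"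
      and "B \<equiv> {(\<sigma>, {1..t - 2})}"
  shows "gap_vector v p B \<and> rev_deletable {1} p B"
  unfolding p_def v_def B_def
  using gap_vector_last_letter[OF assms(1,2)] first_letter_deletable[OF assms(1,2)] by simp

end
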